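(* The sequence of functions $V^n$ converges uniformly on $[0,\infty)\times[0,\bar c]$ to $\bar V$.
   Context: Let $(W_t)_{t\ge0}$ be a standard Brownian motion and $X_t=x+\mu t+\sigma W_t$ with constants $\mu\in\mathbb R$, $\sigma>0$ and initial value $x\ge 0$; $(\mathcal F_t)_{t\ge0}$ is the completed filtration generated by $X$. Fix $q>0$, $\Lambda>0$, $\bar c>0$. For a set $S\subset[0,\bar c]$, $x\ge0$ and $c\in S$, $\Pi^S_{x,c}$ denotes the set of processes $C=(C_t)_{t\ge0}$ that are non-increasing, right-continuous, $(\mathcal F_t)$-adapted, take values in $S$, and satisfy $C_t\le c$ for all $t\ge 0$ (an immediate reduction at time $0$ is allowed). For such $C$, $X^C_t=X_t-\int_0^t C_s\,ds$, $\tau=\inf\{t\ge0: X^C_t<0\}$, $J(x;C)=\mathbb E\big[\int_0^{\tau}e^{-qs}(C_s+\Lambda)\,ds\big]$ and $V^S(x,c)=\sup_{C\in\Pi^S_{x,c}}J(x;C)$. Let $(\mathcal S^n)_{n\ge0}$ be finite sets with $\{0,\bar c\}=\mathcal S^0\subset\mathcal S^1\subset\cdots\subset[0,\bar c]$, each containing $0$ and $\bar c$, whose mesh size $\delta(\mathcal S^n)$ (maximal gap between consecutive elements) tends to $0$. For $(x,c)\in[0,\infty)\times[0,\bar c]$ let $\tilde c^n=\max\{c'\in\mathcal S^n: c'\le c\}$ and $V^n(x,c)=V^{\mathcal S^n}(x,\tilde c^n)$. Then $V^n(x,c)$ is non-decreasing in $n$ and bounded by $V^{[0,\bar c]}(x,c)$,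 and $\bar V(x,c):=\lim_{n\to\infty}V^n(x,c)$. *)

theory Defs
  imports "HOL-Probability.Probability"
begin

definition brownian_motion :: "'a measure \<Rightarrow> (real \<Rightarrow> 'a \<Rightarrow> real) \<Rightarrow> bool" where
  "brownian_motion M W \<longleftrightarrow>
     prob_space M \<and>
     (\<forall>t\<ge>0. W t \<in> borel_measurable M) \<and>
     (\<forall>\<omega>\<in>space M. W 0 \<omega> = 0) \<and>
     (\<forall>\<omega>\<in>space M. continuous_on {0..} (\<lambda>t. W t \<omega>)) \<and>
     (\<forall>s t. 0 \<le> s \<and> s < t \<longrightarrow>
        distributed M lborel (\<lambda>\<omega>. W t \<omega> - W s \<omega>) (normal_density 0 (sqrt (t - s)))) \<and>
     (\<forall>(n::nat) (ts::nat \<Rightarrow> real). 0 \<le> ts 0 \<and> (\<forall>i<n. ts i < ts (Suc i)) \<longrightarrow>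
        prob_space.indep_vars M (\<lambda>_. borel) (\<lambda>i \<omega>. W (ts (Suc i)) \<omega> - W (ts i) \<omega>) {..<n})"

definition proc_X :: "(real \<Rightarrow> 'a \<Rightarrow> real) \<Rightarrow> real \<Rightarrow> real \<Rightarrow> real \<Rightarrow> real \<Rightarrow> 'a \<Rightarrow> real" where
  "proc_X W x \<mu> \<sigma> t \<omega> = x + \<mu> * t + \<sigma> * W t \<omega>"

definition gen_filtration :: "'a measure \<Rightarrow> (real \<Rightarrow> 'a \<Rightarrow> real) \<Rightarrow> real \<Rightarrow> 'a measure" where
  "gen_filtration M X t = sigma (space M)
     ({X s -` B \<inter> space M | s B. 0 \<le> s \<and> s \<le> t \<and> B \<in> sets borel} \<union>
      {N. N \<subseteq> space M \<and> (\<exists>A\<in>null_sets M. N \<subseteq> A)})"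

definition admissible :: "'a measure \<Rightarrow> (real \<Rightarrow> 'a measure) \<Rightarrow> real set \<Rightarrow> real \<Rightarrow> (real \<Rightarrow> 'a \<Rightarrow> real) set" where
  "admissible M F S c = {C.
     (\<forall>\<omega>\<in>space M. \<forall>s t. 0 \<le> s \<and> s \<le> t \<longrightarrow> C t \<omega> \<le> C s \<omega>) \<and>
     (\<forall>\<omega>\<in>space M. \<forall>t\<ge>0. continuous (at_right t) (\<lambda>s. C s \<omega>)) \<and>
     (\<forall>\<omega>\<in>space M. \<forall>t\<ge>0. C t \<omega> \<in> S \<and> C t \<omega> \<le> c) \<and>
     (\<forall>t\<ge>0. (\<lambda>\<omega>. C t \<omega>) \<in> borel_measurable (F t))}"

definition proc_XC :: "(real \<Rightarrow> 'a \<Rightarrow> real) \<Rightarrow> (real \<Rightarrow> 'a \<Rightarrow> real) \<Rightarrow> real \<Rightarrow> 'a \<Rightarrow> real" where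
  "proc_XC X C t \<omega> = X t \<omega> - integral {0..t} (\<lambda>s. C s \<omega>)"

definition ruin_time :: "(real \<Rightarrow> 'a \<Rightarrow> real) \<Rightarrow> (real \<Rightarrow> 'a \<Rightarrow> real) \<Rightarrow> 'a \<Rightarrow> ereal" where
  "ruin_time X C \<omega> = Inf (ereal ` {t. 0 \<le> t \<and> proc_XC X C t \<omega> < 0})"

text \<open>J(x;C) = E[ int_0^tau e^{-qs} (C_s + Lambda) ds ] (nonnegative integrand, finite value).\<close>
definition payoff :: "'a measure \<Rightarrow> (real \<Rightarrow> 'a \<Rightarrow> real) \<Rightarrow> real \<Rightarrow> real \<Rightarrow> real \<Rightarrow> real \<Rightarrow> real
     \<Rightarrow> (real \<Rightarrow> 'a \<Rightarrow> real) \<Rightarrow> real" where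
  "payoff M W \<mu> \<sigma> q \<Lambda> x C = enn2real (\<integral>\<^sup>+ \<omega>.
     (\<integral>\<^sup>+ s. indicator {s. 0 \<le> s \<and> ereal s < ruin_time (proc_X W x \<mu> \<sigma>) C \<omega>} s *
        ennreal (exp (- q * s) * (C s \<omega> + \<Lambda>)) \<partial>lborel) \<partial>completion M)"

definition value_fun :: "'a measure \<Rightarrow> (real \<Rightarrow> 'a \<Rightarrow> real) \<Rightarrow> real \<Rightarrow> real \<Rightarrow> real \<Rightarrow> real
     \<Rightarrow> real set \<Rightarrow> real \<Rightarrow> real \<Rightarrow> real" where
  "value_fun M W \<mu> \<sigma> q \<Lambda> S x c =
     Sup (payoff M W \<mu> \<sigma> q \<Lambda> x ` admissible M (gen_filtration M (proc_X W x \<mu> \<sigma>)) S c)"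

definition mesh :: "real set \<Rightarrow> real" where
  "mesh S = Sup {b - a | a b. a \<in> S \<and> b \<in> S \<and> a < b \<and> {a<..<b} \<inter> S = {}}"

definition Vn :: "'a measure \<Rightarrow> (real \<Rightarrow> 'a \<Rightarrow> real) \<Rightarrow> real \<Rightarrow> real \<Rightarrow> real \<Rightarrow> real
     \<Rightarrow> (nat \<Rightarrow> real set) \<Rightarrow> nat \<Rightarrow> real \<Rightarrow> real \<Rightarrow> real" where
  "Vn M W \<mu> \<sigma> q \<Lambda> Sn n x c = value_fun M W \<mu> \<sigma> q \<Lambda> (Sn n) x (Max {c' \<in> Sn n. c' \<le> c})"

definition Vbar :: "'a measure \<Rightarrow> (real \<Rightarrow> 'a \<Rightarrow> real) \<Rightarrow> real \<Rightarrow> real \<Rightarrow> real \<Rightarrow> real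
     \<Rightarrow> (nat \<Rightarrow> real set) \<Rightarrow> real \<Rightarrow> real \<Rightarrow> real" where
  "Vbar M W \<mu> \<sigma> q \<Lambda> Sn x c = lim (\<lambda>n. Vn M W \<mu> \<sigma> q \<Lambda> Sn n x c)"

end

theory Submission
  imports Defs
begin

text \<open>Rounding an admissible strategy C down to the grid S (strictly below its values, which keeps
  it right-continuous) gives a grid strategy C' with C' \<le> C \<le> C' + \<delta>, \<delta> the mesh of S. A smaller
  consumption rate can only postpone ruin, and C + \<Lambda> \<le> (1 + \<delta>/\<Lambda>) (C' + \<Lambda>), so
  J(x;C) \<le> (1 + \<delta>/\<Lambda>) J(x;C'). As all payoffs lie in [0, (cbar + \<Lambda>)/q], this gives
  |V^{[0,cbar]}(x,c) - V^n(x,c)| \<le> \<delta>(S^n) (cbar + \<Lambda>)/(q \<Lambda>) uniformly in (x,c); hence V^n converges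
  uniformly to V^{[0,cbar]}, which is therefore also its pointwise limit Vbar.\<close>

(* Unlike nn_integral_cmult this needs no measurability of f: the pathwise reward below is not
   known to be measurable in \<omega>. *)
lemma nn_integral_cmult_le:
  fixes c :: ennreal
  assumes "c \<noteq> 0" and "c \<noteq> top"
  shows "(\<integral>\<^sup>+x. c * f x \<partial>M) \<le> c * integral\<^sup>N M f"
proof -
  have "integral\<^sup>S M g \<le> c * integral\<^sup>N M f"
    if g: "simple_function M g" "g \<le> (\<lambda>x. c * f x)" for g
  proof -
    define h where "h x = g x / c" for x
    have h: "simple_function M h"
      using g(1) unfolding h_def by (rule simple_function_compose1)
    have "h x \<le> f x" for x
      using g(2) assms unfolding h_def le_fun_def
      by (metis divide_le_posI_ennreal not_gr_zero)
    then have "integral\<^sup>S M h \<le> integral\<^sup>N M f"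
      using h by (simp add: nn_integral_eq_simple_integral[symmetric] nn_integral_mono)
    moreover have "g = (\<lambda>x. c * h x)"
      unfolding h_def using assms
      by (intro ext) (metis ennreal_times_divide mult.commute ennreal_divide_times mult_divide_eq_ennreal)
    ultimately show ?thesis
      using h by (simp add: mult_left_mono)
  qed
  then show ?thesis
    unfolding nn_integral_def[of M "\<lambda>x. c * f x"] by (auto intro: SUP_least)
qed

lemma nn_integral_exp_neg:
  assumes "q > 0"
  shows "(\<integral>\<^sup>+ s. indicator {0..} s * ennreal (exp (- q * s)) \<partial>lborel) = ennreal (1 / q)"
proof -
  have density_one: "(\<integral>\<^sup>+ s. ennreal (exponential_density q s) \<partial>lborel) = 1"
    using prob_space.emeasure_space_1[OF prob_space_exponential_density[OF assms]]
    by (simp add: emeasure_density)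
  have "(\<integral>\<^sup>+ s. indicator {0..} s * ennreal (exp (- q * s)) \<partial>lborel)
      = (\<integral>\<^sup>+ s. ennreal (1 / q) * ennreal (exponential_density q s) \<partial>lborel)"
    using assms by (intro nn_integral_cong)
      (auto simp: exponential_density_def indicator_def ennreal_mult[symmetric] mult.commute)
  also have "\<dots> = ennreal (1 / q)"
    by (simp add: nn_integral_cmult density_one)
  finally show ?thesis .
qed

lemma uniform_limit_lim:
  assumes "uniform_limit S f g sequentially"
  shows "uniform_limit S f (\<lambda>x. lim (\<lambda>n. f n x)) sequentially"
proof -
  have "g x = lim (\<lambda>n. f n x)" if "x \<in> S" for x
    using tendsto_uniform_limitI[OF assms that] by (rule limI[symmetric])
  with assms show ?thesis
    by (simp cong: uniform_limit_cong')
qed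

lemma uniform_limit_of_dist_bound:
  assumes "\<And>n x. x \<in> S \<Longrightarrow> dist (f n x) (g x) \<le> b n" and "b \<longlonglongrightarrow> 0"
  shows "uniform_limit S f g sequentially"
proof (rule uniform_limitI)
  fix e :: real assume "e > 0"
  with \<open>b \<longlonglongrightarrow> 0\<close> have "\<forall>\<^sub>F n in sequentially. b n < e"
    by (rule order_tendstoD)
  then show "\<forall>\<^sub>F n in sequentially. \<forall>x\<in>S. dist (f n x) (g x) < e"
    by eventually_elim (auto intro: le_less_trans[OF assms(1)])
qed

(* The rounding is strictly below y: this makes grid_below S left-continuous, so that composed with
   a non-increasing right-continuous strategy it is again right-continuous. *)
definition grid_below :: "real set \<Rightarrow> real \<Rightarrow> real" where
  "grid_below S y = Max ({s\<in>S. s < y} \<union> {0})"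

locale finite_grid =
  fixes S :: "real set"
  assumes finite_grid: "finite S" and zero_in_grid: "0 \<in> S" and grid_nonneg: "S \<subseteq> {0..}"
begin

lemma finite_below: "finite ({s\<in>S. s < y} \<union> {0})"
  using finite_grid by auto

lemma grid_below_in: "grid_below S y \<in> S"
proof -
  have "grid_below S y \<in> {s\<in>S. s < y} \<union> {0}"
    unfolding grid_below_def using finite_below by (rule Max_in) auto
  then show ?thesis using zero_in_grid by auto
qed

lemma grid_below_nonneg: "0 \<le> grid_below S y"
  unfolding grid_below_def using finite_below by (intro Max_ge) auto

lemma grid_below_le: "0 \<le> y \<Longrightarrow> grid_below S y \<le> y"
  unfolding grid_below_def using finite_below by (subst Max_le_iff) auto

lemma grid_below_mono: "y \<le> z \<Longrightarrow> grid_below S y \<le> grid_below S z"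
  unfolding grid_below_def using finite_below by (intro Max_mono) auto

lemma grid_below_pos:
  assumes "0 < y"
  shows "grid_below S y = Max {s\<in>S. s < y}" and "grid_below S y < y"
proof -
  have "{s\<in>S. s < y} \<union> {0} = {s\<in>S. s < y}" using zero_in_grid assms by auto
  then show eq: "grid_below S y = Max {s\<in>S. s < y}" unfolding grid_below_def by simp
  have "Max {s\<in>S. s < y} \<in> {s\<in>S. s < y}"
    using finite_grid zero_in_grid assms by (intro Max_in) auto
  then show "grid_below S y < y" unfolding eq by simp
qed

lemma grid_below_const_left:
  assumes "0 \<le> y"
  obtains e where "e > 0" "\<And>z. y - e < z \<Longrightarrow> z \<le> y \<Longrightarrow> grid_below S z = grid_below S y"
proof (cases "y = 0")
  case True
  have "grid_below S z = 0" if "z \<le> 0" for z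
  proof -
    have below: "{s\<in>S. s < z} \<union> {0} = {0}" using grid_nonneg that by force
    show ?thesis unfolding grid_below_def below by simp
  qed
  with True show ?thesis by (intro that[of 1]) auto
next
  case False
  with assms have y: "0 < y" by simp
  have const: "grid_below S z = grid_below S y" if "grid_below S y < z" "z \<le> y" for z
  proof -
    have "{s\<in>S. s < z} = {s\<in>S. s < y}"
    proof safe
      fix s assume "s \<in> S" "s < y"
      then have "s \<le> Max {s\<in>S. s < y}" using finite_grid by (intro Max_ge) auto
      then show "s < z" using that grid_below_pos[OF y] by simp
    qed (use that in auto)
    then show ?thesis unfolding grid_below_def by (simp only:)
  qed
  show ?thesis
  proof (rule that)
    show "0 < y - grid_below S y" using grid_below_pos(2)[OF y] by simp
    show "grid_below S z = grid_below S y" if "y - (y - grid_below S y) < z" "z \<le> y" for z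
      using that by (intro const) simp_all
  qed
qed

lemma continuous_at_right_grid_below:
  fixes g :: "real \<Rightarrow> real"
  assumes g: "continuous (at_right t) g" and anti: "\<And>s. t < s \<Longrightarrow> g s \<le> g t" and "0 \<le> g t"
  shows "continuous (at_right t) (\<lambda>s. grid_below S (g s))"
proof -
  obtain e where e: "e > 0" "\<And>z. g t - e < z \<Longrightarrow> z \<le> g t \<Longrightarrow> grid_below S z = grid_below S (g t)"
    using grid_below_const_left[OF \<open>0 \<le> g t\<close>] by blast
  have "(g \<longlongrightarrow> g t) (at_right t)"
    using g by (simp add: continuous_within)
  then have "\<forall>\<^sub>F s in at_right t. dist (g s) (g t) < e"
    using e(1) by (rule tendstoD)
  then have "\<forall>\<^sub>F s in at_right t. grid_below S (g s) = grid_below S (g t)"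
    using eventually_at_right_less[of t]
  proof eventually_elim
    case (elim s)
    then show ?case using anti[of s] by (intro e(2)) (auto simp: dist_real_def)
  qed
  then show ?thesis
    unfolding continuous_within by (rule tendsto_eventually)
qed

lemma grid_below_gap_le_mesh:
  assumes "0 < y" "b \<in> S" "y \<le> b"
  shows "y - grid_below S y \<le> mesh S"
proof -
  define a where "a = grid_below S y"
  define B where "B = Min {s\<in>S. y \<le> s}"
  have "B \<in> {s\<in>S. y \<le> s}"
    unfolding B_def using finite_grid assms by (intro Min_in) auto
  then have B: "B \<in> S" "y \<le> B" by auto
  have a: "a \<in> S" "a < y"
    unfolding a_def by (rule grid_below_in, rule grid_below_pos(2)[OF \<open>0 < y\<close>])
  have "s \<notin> S" if "a < s" "s < B" for s
  proof
    assume s: "s \<in> S"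
    show False
    proof (cases "s < y")
      case True
      then have "s \<le> Max {s\<in>S. s < y}" using finite_grid s by (intro Max_ge) auto
      then show False using that grid_below_pos[OF \<open>0 < y\<close>] unfolding a_def by simp
    next
      case False
      then have "B \<le> s" unfolding B_def using finite_grid s by (intro Min_le) auto
      then show False using that by simp
    qed
  qed
  then have gap: "B - a \<in> {b - a | a b. a \<in> S \<and> b \<in> S \<and> a < b \<and> {a<..<b} \<inter> S = {}}"
    using a B by fastforce
  have "{b - a | a b. a \<in> S \<and> b \<in> S \<and> a < b \<and> {a<..<b} \<inter> S = {}} \<subseteq> (\<lambda>(a, b). b - a) ` (S \<times> S)"
    by auto
  then have "finite {b - a | a b. a \<in> S \<and> b \<in> S \<and> a < b \<and> {a<..<b} \<inter> S = {}}"
    using finite_grid by (meson finite_SigmaI finite_imageI finite_subset)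
  with gap have "B - a \<le> mesh S"
    unfolding mesh_def by (intro cSup_upper bdd_above_finite)
  then show ?thesis using B unfolding a_def by simp
qed

(* The absolute value guards against the junk value of mesh S, a Sup of a possibly empty set. *)
lemma grid_below_approx:
  assumes "0 \<le> y" "b \<in> S" "y \<le> b"
  shows "grid_below S y \<le> y" and "y \<le> grid_below S y + \<bar>mesh S\<bar>"
proof -
  show "grid_below S y \<le> y" using assms(1) by (rule grid_below_le)
  show "y \<le> grid_below S y + \<bar>mesh S\<bar>"
  proof (cases "y = 0")
    case True
    then show ?thesis using grid_below_nonneg[of y] by simp
  next
    case False
    then show ?thesis using assms grid_below_gap_le_mesh[of y b] by simp
  qed
qed

end

lemma admissibleD:
  assumes "C \<in> admissible M F S c"
  shows "\<And>\<omega> s t. \<omega> \<in> space M \<Longrightarrow> 0 \<le> s \<Longrightarrow> s \<le> t \<Longrightarrow> C t \<omega> \<le> C s \<omega>"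
    and "\<And>\<omega> t. \<omega> \<in> space M \<Longrightarrow> 0 \<le> t \<Longrightarrow> continuous (at_right t) (\<lambda>s. C s \<omega>)"
    and "\<And>\<omega> t. \<omega> \<in> space M \<Longrightarrow> 0 \<le> t \<Longrightarrow> C t \<omega> \<in> S \<and> C t \<omega> \<le> c"
    and "\<And>t. 0 \<le> t \<Longrightarrow> (\<lambda>\<omega>. C t \<omega>) \<in> borel_measurable (F t)"
  using assms unfolding admissible_def by blast+

lemma admissible_zero: "0 \<in> S \<Longrightarrow> 0 \<le> c \<Longrightarrow> (\<lambda>t \<omega>. 0) \<in> admissible M F S c"
  unfolding admissible_def by auto

lemma admissible_mono:
  assumes "S \<subseteq> T" and "c \<le> c'"
  shows "admissible M F S c \<subseteq> admissible M F T c'"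
  using assms(1) order.trans[OF _ assms(2)] unfolding admissible_def by blast

lemma (in finite_grid) admissible_grid_below:
  assumes C: "C \<in> admissible M F T c" and "T \<subseteq> {0..}"
  shows "(\<lambda>t \<omega>. grid_below S (C t \<omega>)) \<in> admissible M F S (Max {c'\<in>S. c' \<le> c})"
proof -
  note C = admissibleD[OF C]
  have nonneg: "0 \<le> C t \<omega>" if "\<omega> \<in> space M" "0 \<le> t" for \<omega> t
    using C(3)[OF that] \<open>T \<subseteq> {0..}\<close> by auto
  have "grid_below S (C t \<omega>) \<le> grid_below S (C s \<omega>)"
    if "\<omega> \<in> space M" "0 \<le> s" "s \<le> t" for \<omega> s t
    using C(1)[OF that] by (rule grid_below_mono)
  moreover have "continuous (at_right t) (\<lambda>s. grid_below S (C s \<omega>))"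
    if "\<omega> \<in> space M" "0 \<le> t" for \<omega> t
  proof (rule continuous_at_right_grid_below)
    show "continuous (at_right t) (\<lambda>s. C s \<omega>)" using C(2)[OF that] .
    show "C s \<omega> \<le> C t \<omega>" if "t < s" for s using C(1) \<open>\<omega> \<in> space M\<close> \<open>0 \<le> t\<close> that by simp
    show "0 \<le> C t \<omega>" using nonneg[OF that] .
  qed
  moreover have "grid_below S (C t \<omega>) \<le> Max {c'\<in>S. c' \<le> c}" if "\<omega> \<in> space M" "0 \<le> t" for \<omega> t
  proof (rule Max_ge)
    show "finite {c'\<in>S. c' \<le> c}" using finite_grid by simp
    show "grid_below S (C t \<omega>) \<in> {c'\<in>S. c' \<le> c}"
      using grid_below_in grid_below_le[OF nonneg[OF that]] C(3)[OF that] by auto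
  qed
  moreover have "(\<lambda>\<omega>. grid_below S (C t \<omega>)) \<in> borel_measurable (F t)" if "0 \<le> t" for t
  proof -
    have "mono (grid_below S)" by (rule monoI) (rule grid_below_mono)
    with C(4)[OF that] show ?thesis by (rule measurable_compose[OF _ borel_measurable_mono])
  qed
  ultimately show ?thesis
    unfolding admissible_def using grid_below_in by blast
qed

lemma integral_admissible_le:
  assumes "C \<in> admissible M F S c" and "C' \<in> admissible M F' S' c'" and "\<omega> \<in> space M"
    and "\<And>t. 0 \<le> t \<Longrightarrow> C' t \<omega> \<le> C t \<omega>"
  shows "integral {0..t} (\<lambda>s. C' s \<omega>) \<le> integral {0..t} (\<lambda>s. C s \<omega>)"
proof -
  have "(\<lambda>s. D s \<omega>) integrable_on {0..t}" if "D \<in> admissible M G U e" for D G U e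
  proof -
    have "mono_on {0..t} (\<lambda>s. - D s \<omega>)"
      using admissibleD(1)[OF that \<open>\<omega> \<in> space M\<close>] by (auto simp: mono_on_def)
    then have "(\<lambda>s. - (- D s \<omega>)) integrable_on {0..t}"
      by (intro integrable_neg integrable_on_mono_on)
    then show ?thesis by simp
  qed
  with assms show ?thesis by (intro integral_le) auto
qed

lemma ruin_time_antimono:
  assumes "C \<in> admissible M F S c" and "C' \<in> admissible M F' S' c'" and "\<omega> \<in> space M"
    and "\<And>t. 0 \<le> t \<Longrightarrow> C' t \<omega> \<le> C t \<omega>"
  shows "ruin_time X C \<omega> \<le> ruin_time X C' \<omega>"
proof -
  have "{t. 0 \<le> t \<and> proc_XC X C' t \<omega> < 0} \<subseteq> {t. 0 \<le> t \<and> proc_XC X C t \<omega> < 0}"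
    unfolding proc_XC_def using integral_admissible_le[OF assms] by (auto intro: less_le_trans)
  then show ?thesis
    unfolding ruin_time_def by (intro Inf_superset_mono image_mono)
qed

definition pathwise_reward :: "(real \<Rightarrow> 'a \<Rightarrow> real) \<Rightarrow> real \<Rightarrow> real \<Rightarrow> real \<Rightarrow> real \<Rightarrow> real
     \<Rightarrow> (real \<Rightarrow> 'a \<Rightarrow> real) \<Rightarrow> 'a \<Rightarrow> ennreal" where
  "pathwise_reward W \<mu> \<sigma> q \<Lambda> x C \<omega> =
     (\<integral>\<^sup>+ s. indicator {s. 0 \<le> s \<and> ereal s < ruin_time (proc_X W x \<mu> \<sigma>) C \<omega>} s *
        ennreal (exp (- q * s) * (C s \<omega> + \<Lambda>)) \<partial>lborel)"

lemma payoff_eq_pathwise_reward: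
  "payoff M W \<mu> \<sigma> q \<Lambda> x C = enn2real (\<integral>\<^sup>+ \<omega>. pathwise_reward W \<mu> \<sigma> q \<Lambda> x C \<omega> \<partial>completion M)"
  unfolding payoff_def pathwise_reward_def ..

lemma pathwise_reward_le:
  assumes C: "C \<in> admissible M F S c" and "S \<subseteq> {0..cbar}" and "q > 0" and "\<Lambda> > 0"
    and "\<omega> \<in> space M"
  shows "pathwise_reward W \<mu> \<sigma> q \<Lambda> x C \<omega> \<le> ennreal ((cbar + \<Lambda>) / q)"
proof -
  have C_range: "0 \<le> C s \<omega> \<and> C s \<omega> \<le> cbar" if "0 \<le> s" for s
    using admissibleD(3)[OF C \<open>\<omega> \<in> space M\<close> that] \<open>S \<subseteq> {0..cbar}\<close> by auto
  from C_range[of 0] have cbar: "0 \<le> cbar" by simp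
  have "pathwise_reward W \<mu> \<sigma> q \<Lambda> x C \<omega>
      \<le> (\<integral>\<^sup>+ s. ennreal (cbar + \<Lambda>) * (indicator {0..} s * ennreal (exp (- q * s))) \<partial>lborel)"
    unfolding pathwise_reward_def
  proof (intro nn_integral_mono)
    fix s :: real
    show "indicator {s. 0 \<le> s \<and> ereal s < ruin_time (proc_X W x \<mu> \<sigma>) C \<omega>} s * ennreal (exp (- q * s) * (C s \<omega> + \<Lambda>))
        \<le> ennreal (cbar + \<Lambda>) * (indicator {0..} s * ennreal (exp (- q * s)))"
    proof (cases "0 \<le> s")
      case True
      have "exp (- q * s) * (C s \<omega> + \<Lambda>) \<le> (cbar + \<Lambda>) * exp (- q * s)"
        using C_range[OF True] by (subst mult.commute, intro mult_right_mono) auto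
      then have "ennreal (exp (- q * s) * (C s \<omega> + \<Lambda>)) \<le> ennreal (cbar + \<Lambda>) * ennreal (exp (- q * s))"
        using cbar \<open>\<Lambda> > 0\<close> by (subst ennreal_mult[symmetric]) (auto intro: ennreal_leI)
      then show ?thesis using True by (simp add: indicator_def)
    qed (simp add: indicator_def)
  qed
  also have "\<dots> = ennreal (cbar + \<Lambda>) * ennreal (1 / q)"
    using nn_integral_exp_neg[OF \<open>q > 0\<close>] by (simp add: nn_integral_cmult)
  also have "\<dots> = ennreal ((cbar + \<Lambda>) / q)"
    using cbar \<open>\<Lambda> > 0\<close> \<open>q > 0\<close> by (subst ennreal_mult[symmetric]) auto
  finally show ?thesis .
qed

lemma nn_integral_pathwise_reward_le:
  assumes "C \<in> admissible M F S c" and "S \<subseteq> {0..cbar}" and "q > 0" and "\<Lambda> > 0"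
    and "prob_space M"
  shows "(\<integral>\<^sup>+ \<omega>. pathwise_reward W \<mu> \<sigma> q \<Lambda> x C \<omega> \<partial>completion M) \<le> ennreal ((cbar + \<Lambda>) / q)"
proof -
  have "(\<integral>\<^sup>+ \<omega>. pathwise_reward W \<mu> \<sigma> q \<Lambda> x C \<omega> \<partial>completion M)
      \<le> (\<integral>\<^sup>+ \<omega>. ennreal ((cbar + \<Lambda>) / q) \<partial>completion M)"
    using assms by (intro nn_integral_mono pathwise_reward_le) auto
  also have "\<dots> = ennreal ((cbar + \<Lambda>) / q)"
    using prob_space.emeasure_space_1[OF \<open>prob_space M\<close>] by (simp add: nn_integral_const)
  finally show ?thesis .
qed

lemma payoff_le:
  assumes "C \<in> admissible M F S c" and "S \<subseteq> {0..cbar}" and "q > 0" and "\<Lambda> > 0"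
    and "prob_space M" and "0 \<le> cbar"
  shows "payoff M W \<mu> \<sigma> q \<Lambda> x C \<le> (cbar + \<Lambda>) / q"
  unfolding payoff_eq_pathwise_reward
  using enn2real_mono[OF nn_integral_pathwise_reward_le[OF assms(1-5)]] assms(3,4,6) by simp

(* The factor 1 + d/\<Lambda> absorbs the additive error d because C' + \<Lambda> \<ge> \<Lambda>. *)
lemma pathwise_reward_le_scaled:
  assumes C: "C \<in> admissible M F S c" and C': "C' \<in> admissible M F' S' c'" and "S' \<subseteq> {0..}"
    and "\<Lambda> > 0" and "0 \<le> d" and "\<omega> \<in> space M"
    and close: "\<And>t. 0 \<le> t \<Longrightarrow> C' t \<omega> \<le> C t \<omega> \<and> C t \<omega> \<le> C' t \<omega> + d"
  shows "pathwise_reward W \<mu> \<sigma> q \<Lambda> x C \<omega> \<le> ennreal (1 + d / \<Lambda>) * pathwise_reward W \<mu> \<sigma> q \<Lambda> x C' \<omega>"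
proof -
  define k where "k = 1 + d / \<Lambda>"
  have k: "1 \<le> k" unfolding k_def using \<open>0 \<le> d\<close> \<open>\<Lambda> > 0\<close> by simp
  let ?X = "proc_X W x \<mu> \<sigma>"
  have ruin: "ruin_time ?X C \<omega> \<le> ruin_time ?X C' \<omega>"
    using close by (intro ruin_time_antimono[OF C C' \<open>\<omega> \<in> space M\<close>]) auto
  have C'_nonneg: "0 \<le> C' s \<omega>" if "0 \<le> s" for s
    using admissibleD(3)[OF C' \<open>\<omega> \<in> space M\<close> that] \<open>S' \<subseteq> {0..}\<close> by auto
  have rate: "C s \<omega> + \<Lambda> \<le> k * (C' s \<omega> + \<Lambda>)" if "0 \<le> s" for s
  proof -
    have "0 \<le> d * C' s \<omega> / \<Lambda>" using C'_nonneg[OF that] \<open>0 \<le> d\<close> \<open>\<Lambda> > 0\<close> by simp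
    moreover have "k * (C' s \<omega> + \<Lambda>) = C' s \<omega> + \<Lambda> + d + d * C' s \<omega> / \<Lambda>"
      unfolding k_def using \<open>\<Lambda> > 0\<close> by (simp add: field_simps)
    ultimately show ?thesis using close[OF that] by linarith
  qed
  have "pathwise_reward W \<mu> \<sigma> q \<Lambda> x C \<omega>
      \<le> (\<integral>\<^sup>+ s. ennreal k * (indicator {s. 0 \<le> s \<and> ereal s < ruin_time ?X C' \<omega>} s *
           ennreal (exp (- q * s) * (C' s \<omega> + \<Lambda>))) \<partial>lborel)"
    unfolding pathwise_reward_def
  proof (intro nn_integral_mono)
    fix s :: real
    show "indicator {s. 0 \<le> s \<and> ereal s < ruin_time ?X C \<omega>} s * ennreal (exp (- q * s) * (C s \<omega> + \<Lambda>))
        \<le> ennreal k * (indicator {s. 0 \<le> s \<and> ereal s < ruin_time ?X C' \<omega>} s *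
           ennreal (exp (- q * s) * (C' s \<omega> + \<Lambda>)))"
    proof (cases "0 \<le> s \<and> ereal s < ruin_time ?X C \<omega>")
      case True
      then have s: "0 \<le> s" "ereal s < ruin_time ?X C' \<omega>"
        using ruin by (auto intro: less_le_trans)
      have "exp (- q * s) * (C s \<omega> + \<Lambda>) \<le> k * (exp (- q * s) * (C' s \<omega> + \<Lambda>))"
        using rate[OF s(1)] by (simp add: mult.left_commute)
      moreover have "0 \<le> exp (- q * s) * (C' s \<omega> + \<Lambda>)"
        using C'_nonneg[OF s(1)] \<open>\<Lambda> > 0\<close> by simp
      ultimately have "ennreal (exp (- q * s) * (C s \<omega> + \<Lambda>))
          \<le> ennreal k * ennreal (exp (- q * s) * (C' s \<omega> + \<Lambda>))"
        using k by (subst ennreal_mult[symmetric]) (auto intro: ennreal_leI)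
      then show ?thesis using True s by (simp add: indicator_def)
    qed (auto simp: indicator_def)
  qed
  also have "\<dots> \<le> ennreal k * pathwise_reward W \<mu> \<sigma> q \<Lambda> x C' \<omega>"
    unfolding pathwise_reward_def using k by (intro nn_integral_cmult_le) auto
  finally show ?thesis unfolding k_def .
qed

lemma payoff_le_scaled:
  assumes C: "C \<in> admissible M F S c" and C': "C' \<in> admissible M F' S' c'" and S': "S' \<subseteq> {0..cbar}"
    and "q > 0" and "\<Lambda> > 0" and "prob_space M" and "0 \<le> d"
    and close: "\<And>\<omega> t. \<omega> \<in> space M \<Longrightarrow> 0 \<le> t \<Longrightarrow> C' t \<omega> \<le> C t \<omega> \<and> C t \<omega> \<le> C' t \<omega> + d"
  shows "payoff M W \<mu> \<sigma> q \<Lambda> x C \<le> (1 + d / \<Lambda>) * payoff M W \<mu> \<sigma> q \<Lambda> x C'"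
proof -
  define k where "k = 1 + d / \<Lambda>"
  have k: "1 \<le> k" unfolding k_def using \<open>0 \<le> d\<close> \<open>\<Lambda> > 0\<close> by simp
  let ?J = "\<lambda>C. \<integral>\<^sup>+ \<omega>. pathwise_reward W \<mu> \<sigma> q \<Lambda> x C \<omega> \<partial>completion M"
  have "?J C \<le> (\<integral>\<^sup>+ \<omega>. ennreal k * pathwise_reward W \<mu> \<sigma> q \<Lambda> x C' \<omega> \<partial>completion M)"
    unfolding k_def using S' \<open>\<Lambda> > 0\<close> \<open>0 \<le> d\<close> close
    by (intro nn_integral_mono pathwise_reward_le_scaled[OF C C']) auto
  also have "\<dots> \<le> ennreal k * ?J C'"
    using k by (intro nn_integral_cmult_le) auto
  finally have "?J C \<le> ennreal k * ?J C'" .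
  moreover have "?J C' < top"
    using nn_integral_pathwise_reward_le[OF C' S' \<open>q > 0\<close> \<open>\<Lambda> > 0\<close> \<open>prob_space M\<close>]
    by (rule le_less_trans) simp
  ultimately have "enn2real (?J C) \<le> enn2real (ennreal k * ?J C')"
    by (intro enn2real_mono) (simp_all add: ennreal_mult_less_top)
  then show ?thesis
    unfolding payoff_eq_pathwise_reward k_def[symmetric] using k by (simp add: enn2real_mult)
qed

lemma bdd_above_payoff:
  assumes "prob_space M" and "q > 0" and "\<Lambda> > 0" and "S \<subseteq> {0..cbar}" and "0 \<le> cbar"
  shows "bdd_above (payoff M W \<mu> \<sigma> q \<Lambda> x ` admissible M F S c)"
  using payoff_le assms by (intro bdd_aboveI[of _ "(cbar + \<Lambda>) / q"]) blast

lemma value_fun_le: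
  assumes "prob_space M" and "q > 0" and "\<Lambda> > 0" and "0 \<in> S" and "S \<subseteq> {0..cbar}" and "0 \<le> c"
  shows "value_fun M W \<mu> \<sigma> q \<Lambda> S x c \<le> (cbar + \<Lambda>) / q"
  unfolding value_fun_def
proof (rule cSUP_least)
  show "admissible M (gen_filtration M (proc_X W x \<mu> \<sigma>)) S c \<noteq> {}"
    using admissible_zero[OF \<open>0 \<in> S\<close> \<open>0 \<le> c\<close>] by blast
  have "0 \<le> cbar" using \<open>0 \<in> S\<close> \<open>S \<subseteq> {0..cbar}\<close> by auto
  then show "payoff M W \<mu> \<sigma> q \<Lambda> x C \<le> (cbar + \<Lambda>) / q"
    if "C \<in> admissible M (gen_filtration M (proc_X W x \<mu> \<sigma>)) S c" for C
    using payoff_le[OF that] assms by blast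
qed

lemma value_fun_mono:
  assumes M: "prob_space M" and "q > 0" and "\<Lambda> > 0" and "0 \<in> S" and "S \<subseteq> T" and T: "T \<subseteq> {0..cbar}"
    and "0 \<le> c'" and "c' \<le> c"
  shows "value_fun M W \<mu> \<sigma> q \<Lambda> S x c' \<le> value_fun M W \<mu> \<sigma> q \<Lambda> T x c"
  unfolding value_fun_def
proof (rule cSup_subset_mono)
  let ?F = "gen_filtration M (proc_X W x \<mu> \<sigma>)"
  let ?P = "payoff M W \<mu> \<sigma> q \<Lambda> x"
  show "?P ` admissible M ?F S c' \<noteq> {}"
    using admissible_zero[OF \<open>0 \<in> S\<close> \<open>0 \<le> c'\<close>] by blast
  show "bdd_above (?P ` admissible M ?F T c)"
    using assms by (intro bdd_above_payoff[OF M \<open>q > 0\<close> \<open>\<Lambda> > 0\<close> T]) auto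
  show "?P ` admissible M ?F S c' \<subseteq> ?P ` admissible M ?F T c"
    using assms by (intro image_mono admissible_mono)
qed

lemma value_fun_le_grid:
  assumes M: "prob_space M" and "q > 0" and "\<Lambda> > 0" and "finite S" and "0 \<in> S" and "cbar \<in> S"
    and S: "S \<subseteq> {0..cbar}" and c: "0 \<le> c"
  shows "value_fun M W \<mu> \<sigma> q \<Lambda> {0..cbar} x c
           \<le> (1 + \<bar>mesh S\<bar> / \<Lambda>) * value_fun M W \<mu> \<sigma> q \<Lambda> S x (Max {c'\<in>S. c' \<le> c})"
  unfolding value_fun_def[of _ _ _ _ _ _ "{0..cbar}"]
proof (rule cSUP_least)
  interpret finite_grid S using assms by unfold_locales auto
  let ?F = "gen_filtration M (proc_X W x \<mu> \<sigma>)"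
  let ?P = "payoff M W \<mu> \<sigma> q \<Lambda> x"
  let ?c\<^sub>S = "Max {c'\<in>S. c' \<le> c}"
  have cbar: "0 \<le> cbar" using S \<open>cbar \<in> S\<close> by auto
  with c show "admissible M ?F {0..cbar} c \<noteq> {}"
    using admissible_zero[of "{0..cbar}" c M ?F] by auto
  fix C assume C: "C \<in> admissible M ?F {0..cbar} c"
  define C' where "C' = (\<lambda>t \<omega>. grid_below S (C t \<omega>))"
  have C': "C' \<in> admissible M ?F S ?c\<^sub>S"
    unfolding C'_def by (rule admissible_grid_below[OF C]) simp
  have "C' t \<omega> \<le> C t \<omega> \<and> C t \<omega> \<le> C' t \<omega> + \<bar>mesh S\<bar>" if "\<omega> \<in> space M" "0 \<le> t" for \<omega> t
    using admissibleD(3)[OF C that] grid_below_approx[of "C t \<omega>" cbar] \<open>cbar \<in> S\<close>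
    unfolding C'_def by auto
  then have "?P C \<le> (1 + \<bar>mesh S\<bar> / \<Lambda>) * ?P C'"
    using S assms(2,3) M by (intro payoff_le_scaled[OF C C']) auto
  also have "?P C' \<le> value_fun M W \<mu> \<sigma> q \<Lambda> S x ?c\<^sub>S"
    unfolding value_fun_def using C' cbar
    by (intro cSUP_upper bdd_above_payoff[OF M \<open>q > 0\<close> \<open>\<Lambda> > 0\<close> S])
  finally show "?P C \<le> (1 + \<bar>mesh S\<bar> / \<Lambda>) * value_fun M W \<mu> \<sigma> q \<Lambda> S x ?c\<^sub>S"
    using \<open>\<Lambda> > 0\<close> by (simp add: mult_left_mono)
qed

lemma value_fun_grid_approx:
  assumes M: "prob_space M" and "q > 0" and "\<Lambda> > 0" and "finite S" and "0 \<in> S" and "cbar \<in> S"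
    and S: "S \<subseteq> {0..cbar}" and c: "0 \<le> c" "c \<le> cbar"
  shows "\<bar>value_fun M W \<mu> \<sigma> q \<Lambda> {0..cbar} x c - value_fun M W \<mu> \<sigma> q \<Lambda> S x (Max {c'\<in>S. c' \<le> c})\<bar>
           \<le> \<bar>mesh S\<bar> / \<Lambda> * ((cbar + \<Lambda>) / q)"
proof -
  define c\<^sub>S where "c\<^sub>S = Max {c'\<in>S. c' \<le> c}"
  define \<delta> where "\<delta> = \<bar>mesh S\<bar> / \<Lambda>"
  let ?V = "value_fun M W \<mu> \<sigma> q \<Lambda> {0..cbar} x c"
  let ?V\<^sub>S = "value_fun M W \<mu> \<sigma> q \<Lambda> S x c\<^sub>S"
  have "c\<^sub>S \<in> {c'\<in>S. c' \<le> c}"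
    unfolding c\<^sub>S_def using assms by (intro Max_in) auto
  moreover have "0 \<le> c\<^sub>S"
    unfolding c\<^sub>S_def using assms by (intro Max_ge) auto
  ultimately have c\<^sub>S: "0 \<le> c\<^sub>S" "c\<^sub>S \<le> c" by auto
  have "?V\<^sub>S \<le> ?V"
    using assms c\<^sub>S by (intro value_fun_mono[OF M]) auto
  moreover have "?V \<le> ?V\<^sub>S + \<delta> * ?V\<^sub>S"
    using value_fun_le_grid[OF assms(1-8)] unfolding c\<^sub>S_def[symmetric] \<delta>_def
    by (simp add: distrib_right)
  moreover have "\<delta> * ?V\<^sub>S \<le> \<delta> * ((cbar + \<Lambda>) / q)"
    using value_fun_le[OF M \<open>q > 0\<close> \<open>\<Lambda> > 0\<close> \<open>0 \<in> S\<close> S c\<^sub>S(1)] \<open>\<Lambda> > 0\<close>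
    unfolding \<delta>_def by (intro mult_left_mono) auto
  ultimately show ?thesis
    unfolding c\<^sub>S_def[symmetric] \<delta>_def[symmetric] by linarith
qed

theorem proposition5p1:
  fixes M :: "'a measure" and W :: "real \<Rightarrow> 'a \<Rightarrow> real"
    and \<mu> \<sigma> q \<Lambda> cbar :: real and Sn :: "nat \<Rightarrow> real set"
  assumes "brownian_motion M W"
    and "\<sigma> > 0" and "q > 0" and "\<Lambda> > 0" and "cbar > 0"
    and "\<forall>n. finite (Sn n)"
    and "Sn 0 = {0, cbar}"
    and "\<forall>n. Sn n \<subseteq> Sn (Suc n)"
    and "\<forall>n. Sn n \<subseteq> {0..cbar}"
    and "\<forall>n. 0 \<in> Sn n \<and> cbar \<in> Sn n"
    and "(\<lambda>n. mesh (Sn n)) \<longlonglongrightarrow> 0"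
  shows "uniform_limit ({0..} \<times> {0..cbar})
           (\<lambda>n (x, c). Vn M W \<mu> \<sigma> q \<Lambda> Sn n x c)
           (\<lambda>(x, c). Vbar M W \<mu> \<sigma> q \<Lambda> Sn x c) sequentially"
proof -
  have M: "prob_space M" using assms(1) unfolding brownian_motion_def by blast
  define b where "b n = \<bar>mesh (Sn n)\<bar> / \<Lambda> * ((cbar + \<Lambda>) / q)" for n
  have "b \<longlonglongrightarrow> \<bar>0\<bar> / \<Lambda> * ((cbar + \<Lambda>) / q)"
    unfolding b_def using assms(4) by (intro tendsto_intros assms(11)) auto
  then have "b \<longlonglongrightarrow> 0" by simp
  moreover have "dist (Vn M W \<mu> \<sigma> q \<Lambda> Sn n x c) (value_fun M W \<mu> \<sigma> q \<Lambda> {0..cbar} x c) \<le> b n"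
    if "0 \<le> c" "c \<le> cbar" for n x c
    unfolding b_def Vn_def dist_real_def using assms M that
    by (subst abs_minus_commute, intro value_fun_grid_approx) auto
  ultimately have "uniform_limit ({0..} \<times> {0..cbar}) (\<lambda>n (x, c). Vn M W \<mu> \<sigma> q \<Lambda> Sn n x c)
      (\<lambda>(x, c). value_fun M W \<mu> \<sigma> q \<Lambda> {0..cbar} x c) sequentially"
    by (intro uniform_limit_of_dist_bound) auto
  then have "uniform_limit ({0..} \<times> {0..cbar}) (\<lambda>n (x, c). Vn M W \<mu> \<sigma> q \<Lambda> Sn n x c)
      (\<lambda>xc. lim (\<lambda>n. (\<lambda>(x, c). Vn M W \<mu> \<sigma> q \<Lambda> Sn n x c) xc)) sequentially"
    by (rule uniform_limit_lim)
  moreover have "(\<lambda>xc. lim (\<lambda>n. (\<lambda>(x, c). Vn M W \<mu> \<sigma> q \<Lambda> Sn n x c) xc))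
      = (\<lambda>(x, c). Vbar M W \<mu> \<sigma> q \<Lambda> Sn x c)"
    by (auto simp: Vbar_def fun_eq_iff)
  ultimately show ?thesis by simp
qed

end
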